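(* Let $T$ be a binary phylogenetic tree with $n$ leaves. Then $\Phi(T)$ is minimum among all binary phylogenetic trees with $n$ leaves if and only if $T$ is maximally balanced.
   Context: A phylogenetic tree with $n$ leaves is a rooted tree whose leaves are bijectively labeled by $\{1,\dots,n\}$; binary means every internal node has exactly two children. $\kappa_T(v)$ is the number of leaves descending from node $v$. An internal node $v$ with children $v_1,v_2$ is balanced if $|\kappa_T(v_1)-\kappa_T(v_2)|\le 1$; $T$ is maximally balanced if all its internal nodes are balanced. The depth $\delta_T(v)$ is the number of arcs from the root to $v$; for leaves $i,j$, $\varphi_T(i,j)=\delta_T(LCA_T(i,j))$ ($LCA$ = lowest common ancestor), and $\Phi(T)=\sum_{1\le i<j\le n}\varphi_T(i,j)$. *)

theory Defs
  imports Main
begin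

text \<open>Rooted binary trees with labelled leaves. A node has exactly two children;
  the order of the children is irrelevant to all notions below.\<close>
datatype btree = Leaf nat | Node btree btree

fun leaves :: "btree \<Rightarrow> nat list" where
  "leaves (Leaf i) = [i]"
| "leaves (Node l r) = leaves l @ leaves r"

definition kappa :: "btree \<Rightarrow> nat" where
  "kappa t = length (leaves t)"

definition is_phylo :: "nat \<Rightarrow> btree \<Rightarrow> bool" where
  "is_phylo n t \<longleftrightarrow> distinct (leaves t) \<and> set (leaves t) = {1..n}"

fun max_balanced :: "btree \<Rightarrow> bool" where
  "max_balanced (Leaf i) = True"
| "max_balanced (Node l r) =
     ((if kappa l \<le> kappa r then kappa r - kappa l else kappa l - kappa r) \<le> 1
      \<and> max_balanced l \<and> max_balanced r)"

fun lca_depth :: "btree \<Rightarrow> nat \<Rightarrow> nat \<Rightarrow> nat" where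
  "lca_depth (Leaf k) i j = 0"
| "lca_depth (Node l r) i j =
     (if i \<in> set (leaves l) \<and> j \<in> set (leaves l) then 1 + lca_depth l i j
      else if i \<in> set (leaves r) \<and> j \<in> set (leaves r) then 1 + lca_depth r i j
      else 0)"

definition Phi :: "nat \<Rightarrow> btree \<Rightarrow> nat" where
  "Phi n t = (\<Sum>(i,j) \<in> {(i,j). 1 \<le> i \<and> i < j \<and> j \<le> n}. lca_depth t i j)"

end

theory Submission
  imports Defs
begin

text \<open>
  For a tree t with distinct leaves, every pair of leaves lying in the
  same child subtree of the root gains one unit of LCA depth from the root arc, so
  Phi satisfies the recursion
     phi (Node l r) = phi l + phi r + C(kappa l, 2) + C(kappa r, 2).
  Define min_phi k as the value of this recursion on the tree which always splits
  as evenly as possible. Its increments min_phi (k+1) - min_phi k = min_phi_step k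
  are monotone in k; this gives an exchange inequality: moving one leaf from the
  larger to the smaller side of a split with sizes differing by at least 2 strictly
  decreases the cost. Hence min_phi (a+b) bounds the cost of every split (a, b), with
  equality iff |a - b| <= 1. By induction on trees, phi t >= min_phi (kappa t) with
  equality iff t is maximally balanced. Since a maximally balanced phylogenetic
  tree exists for every n >= 1, the minimum of Phi is exactly min_phi n, and the
  theorem follows.
\<close>

lemma kappa_Leaf [simp]: "kappa (Leaf i) = 1"
  by (simp add: kappa_def)

lemma kappa_Node [simp]: "kappa (Node l r) = kappa l + kappa r"
  by (simp add: kappa_def)

lemma kappa_pos: "1 \<le> kappa t"
  by (induction t) auto

section \<open>The recursive form of Phi\<close>

text \<open>The recursion satisfied by Phi on trees with distinct leaves.\<close>
fun phi :: "btree \<Rightarrow> nat" where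
  "phi (Leaf i) = 0"
| "phi (Node l r) = phi l + phi r + (kappa l choose 2) + (kappa r choose 2)"

definition pairs :: "nat set \<Rightarrow> (nat \<times> nat) set" where
  "pairs S = {(i, j). i < j \<and> i \<in> S \<and> j \<in> S}"

lemma finite_pairs: "finite S \<Longrightarrow> finite (pairs S)"
  by (rule finite_subset[of _ "S \<times> S"]) (auto simp: pairs_def)

text \<open>A finite set of size k has C(k, 2) pairs: pairs correspond to 2-subsets.\<close>
lemma card_pairs:
  assumes "finite S"
  shows "card (pairs S) = card S choose 2"
proof -
  let ?to_set = "\<lambda>(i, j). {i, j :: nat}"
  have inj: "inj_on ?to_set (pairs S)"
    by (auto simp: inj_on_def pairs_def doubleton_eq_iff)
  have "?to_set ` pairs S = {B. B \<subseteq> S \<and> card B = 2}"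
  proof (intro equalityI subsetI)
    fix B assume "B \<in> {B. B \<subseteq> S \<and> card B = 2}"
    then obtain x y where B: "B = {x, y}" "x \<noteq> y" "x \<in> S" "y \<in> S"
      by (auto simp: card_2_iff)
    then have "B = ?to_set (min x y, max x y)" "(min x y, max x y) \<in> pairs S"
      by (auto simp: pairs_def min_def max_def insert_commute)
    then show "B \<in> ?to_set ` pairs S" by blast
  qed (auto simp: pairs_def)
  then have "card (pairs S) = card {B. B \<subseteq> S \<and> card B = 2}"
    using card_image[OF inj] by simp
  also have "\<dots> = card S choose 2"
    using n_subsets[OF assms] by simp
  finally show ?thesis .
qed

lemma sum_pairs_subtree:
  assumes "distinct (leaves t)"
    and IH: "(\<Sum>(i, j) \<in> pairs (set (leaves t)). lca_depth t i j) = phi t"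
    and depth: "\<And>i j. (i, j) \<in> pairs (set (leaves t)) \<Longrightarrow> g (i, j) = 1 + lca_depth t i j"
  shows "sum g (pairs (set (leaves t))) = (kappa t choose 2) + phi t"
proof -
  have "sum g (pairs (set (leaves t))) = (\<Sum>p \<in> pairs (set (leaves t)). 1 + (case p of (i, j) \<Rightarrow> lca_depth t i j))"
    by (rule sum.cong) (auto simp: depth)
  also have "\<dots> = card (pairs (set (leaves t))) + phi t"
    by (subst sum.distrib) (simp add: IH)
  also have "card (pairs (set (leaves t))) = kappa t choose 2"
    using card_pairs[of "set (leaves t)"] assms(1) by (simp add: kappa_def distinct_card)
  finally show ?thesis .
qed

lemma sum_lca_depth_eq_phi:
  "distinct (leaves t) \<Longrightarrow> (\<Sum>(i, j) \<in> pairs (set (leaves t)). lca_depth t i j) = phi t"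
proof (induction t)
  case (Leaf x)
  then show ?case by (simp add: pairs_def)
next
  case (Node l r)
  define L R where "L = set (leaves l)" and "R = set (leaves r)"
  let ?g = "\<lambda>(i, j). lca_depth (Node l r) i j"
  have dl: "distinct (leaves l)" and dr: "distinct (leaves r)" and LR: "L \<inter> R = {}"
    using Node.prems by (auto simp: L_def R_def)
  have fin: "finite (pairs L)" "finite (pairs R)" "finite (pairs (L \<union> R))"
    by (auto intro: finite_pairs simp: L_def R_def)
  have "pairs L \<union> pairs R \<subseteq> pairs (L \<union> R)"
    by (auto simp: pairs_def)
  then have "sum ?g (pairs (L \<union> R)) = sum ?g (pairs (L \<union> R) - (pairs L \<union> pairs R))
        + sum ?g (pairs L \<union> pairs R)"
    using fin(3) by (rule sum.subset_diff)
  txt \<open>Pairs separated by the root have their LCA at the root, at depth 0.\<close>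
  also have "sum ?g (pairs (L \<union> R) - (pairs L \<union> pairs R)) = 0"
    using LR by (intro sum.neutral) (auto simp: pairs_def L_def R_def)
  also have "sum ?g (pairs L \<union> pairs R) = sum ?g (pairs L) + sum ?g (pairs R)"
    using LR fin by (intro sum.union_disjoint) (auto simp: pairs_def)
  also have "sum ?g (pairs L) = (kappa l choose 2) + phi l"
    unfolding L_def by (rule sum_pairs_subtree[OF dl Node.IH(1)[OF dl]]) (auto simp: pairs_def)
  also have "sum ?g (pairs R) = (kappa r choose 2) + phi r"
    unfolding R_def using LR
    by (intro sum_pairs_subtree[OF dr Node.IH(2)[OF dr]]) (auto simp: pairs_def L_def R_def)
  finally show ?case by (simp add: L_def R_def)
qed

lemma Phi_eq_phi:
  assumes "is_phylo n t"
  shows "Phi n t = phi t" and "kappa t = n"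
proof -
  have "{(i, j). 1 \<le> i \<and> i < j \<and> j \<le> n} = pairs (set (leaves t))"
    using assms by (auto simp: is_phylo_def pairs_def)
  then have "Phi n t = (\<Sum>(i, j) \<in> pairs (set (leaves t)). lca_depth t i j)"
    by (simp add: Phi_def)
  also have "\<dots> = phi t"
    using sum_lca_depth_eq_phi assms unfolding is_phylo_def by blast
  finally show "Phi n t = phi t" .
  show "kappa t = n"
    using assms by (metis card_atLeastAtMost diff_Suc_1 distinct_card is_phylo_def kappa_def)
qed

section \<open>The minimal value of the recursion\<close>

text \<open>The value of phi on a tree with k leaves that splits as evenly as possible
  at every node (the larger part, of size k - k div 2, on the left).\<close>
function min_phi :: "nat \<Rightarrow> nat" where
  "min_phi k = (if k \<le> 1 then 0
     else min_phi (k - k div 2) + min_phi (k div 2)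
          + ((k - k div 2) choose 2) + ((k div 2) choose 2))"
  by auto
termination by (relation "measure id") auto

declare min_phi.simps [simp del]

text \<open>The best possible cost of a tree whose root splits the leaves into parts a, b.\<close>
definition split_cost :: "nat \<Rightarrow> nat \<Rightarrow> nat" where
  "split_cost a b = min_phi a + min_phi b + (a choose 2) + (b choose 2)"

lemma split_cost_commute: "split_cost a b = split_cost b a"
  by (simp add: split_cost_def)

lemma min_phi_1: "min_phi (Suc 0) = 0"
  by (subst min_phi.simps) simp

lemma min_phi_split: "2 \<le> k \<Longrightarrow> min_phi k = split_cost (k - k div 2) (k div 2)"
  by (subst min_phi.simps) (simp add: split_cost_def)

lemma choose_2_Suc: "(Suc a choose 2) = (a choose 2) + a"
  by (simp add: numeral_2_eq_2)

text \<open>The increment min_phi (k+1) - min_phi k, given by its own recursion.\<close>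
function min_phi_step :: "nat \<Rightarrow> nat" where
  "min_phi_step k = (if k \<le> 1 then 0 else min_phi_step (k div 2) + k div 2)"
  by auto
termination by (relation "measure id") auto

declare min_phi_step.simps [simp del]

lemma min_phi_step_rec: "2 \<le> k \<Longrightarrow> min_phi_step k = min_phi_step (k div 2) + k div 2"
  by (subst min_phi_step.simps) simp

text \<open>Adding a leaf to the balanced tree on k leaves adds it to the smaller half.\<close>
lemma min_phi_Suc: "1 \<le> k \<Longrightarrow> min_phi (Suc k) = min_phi k + min_phi_step k"
proof (induction k rule: less_induct)
  case (less k)
  show ?case
  proof (cases "k = 1")
    case True
    then show ?thesis
      by (simp add: min_phi_split split_cost_def min_phi_1 min_phi_step.simps)
  next
    case False
    then have k2: "2 \<le> k" using less.prems by simp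
    define m where "m = k div 2"
    have m1: "1 \<le> m" and m_lt: "m < k" using k2 by (auto simp: m_def)
    have IH: "min_phi (Suc m) = min_phi m + min_phi_step m"
      using less.IH[OF m_lt m1] .
    have step: "min_phi_step k = min_phi_step m + m"
      using min_phi_step_rec[OF k2] by (simp add: m_def)
    have "k = 2 * m \<or> k = 2 * m + 1" unfolding m_def by presburger
    then show ?thesis
    proof
      assume "k = 2 * m"
      then have "min_phi k = split_cost m m" "min_phi (Suc k) = split_cost (Suc m) m"
        using min_phi_split[of k] min_phi_split[of "Suc k"] k2 by simp_all
      then show ?thesis using IH step by (simp add: split_cost_def choose_2_Suc)
    next
      assume "k = 2 * m + 1"
      then have "min_phi k = split_cost (Suc m) m" "min_phi (Suc k) = split_cost (Suc m) (Suc m)"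
        using min_phi_split[of k] min_phi_split[of "Suc k"] k2 by simp_all
      then show ?thesis using IH step by (simp add: split_cost_def choose_2_Suc)
    qed
  qed
qed

lemma min_phi_step_mono: "a \<le> b \<Longrightarrow> min_phi_step a \<le> min_phi_step b"
proof -
  have "min_phi_step k \<le> min_phi_step (Suc k)" for k
  proof (induction k rule: less_induct)
    case (less k)
    show ?case
    proof (cases "k \<le> 1")
      case True
      then show ?thesis by (simp add: min_phi_step.simps)
    next
      case False
      have "min_phi_step (k div 2) \<le> min_phi_step (Suc (k div 2))"
        using less.IH False by simp
      moreover have "Suc k div 2 = k div 2 \<or> Suc k div 2 = Suc (k div 2)" by presburger
      ultimately show ?thesis
        using False min_phi_step_rec[of k] min_phi_step_rec[of "Suc k"] by auto
    qed
  qed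
  then show "a \<le> b \<Longrightarrow> min_phi_step a \<le> min_phi_step b"
    using lift_Suc_mono_le[of min_phi_step] by blast
qed

lemma split_cost_exchange:
  assumes "1 \<le> b" and "b + 2 \<le> a"
  shows "split_cost (a - 1) (Suc b) < split_cost a b"
proof -
  obtain a' where a: "a = Suc a'"
    using assms(2) by (cases a) auto
  have "b < a'" using assms(2) a by simp
  have "min_phi (Suc a') = min_phi a' + min_phi_step a'"
    using min_phi_Suc \<open>b < a'\<close> assms(1) by simp
  moreover have "min_phi (Suc b) = min_phi b + min_phi_step b"
    using min_phi_Suc assms(1) .
  moreover have "min_phi_step b \<le> min_phi_step a'"
    using min_phi_step_mono \<open>b < a'\<close> by simp
  ultimately show ?thesis
    using \<open>b < a'\<close> unfolding split_cost_def a by (simp add: choose_2_Suc)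
qed

lemma min_phi_le_split_cost_ordered:
  assumes "1 \<le> b" and "b \<le> a"
  shows "min_phi (a + b) \<le> split_cost a b \<and> (min_phi (a + b) = split_cost a b \<longleftrightarrow> a - b \<le> 1)"
  using assms
proof (induction "a - b" arbitrary: a b rule: less_induct)
  case less
  show ?case
  proof (cases "a - b \<le> 1")
    case True
    then have "(a + b) div 2 = b" "(a + b) - (a + b) div 2 = a" using less.prems by auto
    then have "min_phi (a + b) = split_cost a b"
      using min_phi_split[of "a + b"] less.prems by simp
    then show ?thesis using True by simp
  next
    case False
    have "min_phi (a - 1 + Suc b) \<le> split_cost (a - 1) (Suc b)"
      using less.hyps[of "a - 1" "Suc b"] less.prems False by auto
    moreover have "split_cost (a - 1) (Suc b) < split_cost a b"
      using split_cost_exchange less.prems False by simp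
    moreover have "a - 1 + Suc b = a + b" using False by simp
    ultimately show ?thesis using False by simp
  qed
qed

text \<open>The same for an arbitrary split, with the balance condition in the form used
  by max_balanced.\<close>
lemma min_phi_le_split_cost:
  assumes "1 \<le> a" and "1 \<le> b"
  shows "min_phi (a + b) \<le> split_cost a b \<and>
    (min_phi (a + b) = split_cost a b \<longleftrightarrow> (if a \<le> b then b - a else a - b) \<le> 1)"
proof (cases "b \<le> a")
  case True
  then show ?thesis using min_phi_le_split_cost_ordered assms by auto
next
  case False
  then show ?thesis
    using min_phi_le_split_cost_ordered[of a b] assms
    by (simp add: add.commute split_cost_commute)
qed

lemma phi_lower_bound:
  "min_phi (kappa t) \<le> phi t \<and> (phi t = min_phi (kappa t) \<longleftrightarrow> max_balanced t)"
proof (induction t)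
  case (Leaf i)
  then show ?case by (simp add: min_phi_1)
next
  case (Node l r)
  then show ?case
    using min_phi_le_split_cost[OF kappa_pos kappa_pos, of l r]
    by (auto simp: split_cost_def)
qed

section \<open>Maximally balanced phylogenetic trees exist\<close>

function balanced_tree :: "nat \<Rightarrow> nat \<Rightarrow> btree" where
  "balanced_tree lo k = (if k \<le> 1 then Leaf lo
     else Node (balanced_tree lo (k - k div 2)) (balanced_tree (lo + (k - k div 2)) (k div 2)))"
  by auto
termination by (relation "measure snd") auto

declare balanced_tree.simps [simp del]

lemma leaves_balanced_tree: "1 \<le> k \<Longrightarrow> leaves (balanced_tree lo k) = [lo..<lo + k]"
proof (induction lo k rule: balanced_tree.induct)
  case (1 lo k)
  show ?case
  proof (cases "k \<le> 1")
    case True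
    then have "k = 1" using "1.prems" by simp
    then show ?thesis by (simp add: balanced_tree.simps)
  next
    case False
    let ?a = "k - k div 2"
    have "leaves (balanced_tree lo k) = [lo..<lo + ?a] @ [lo + ?a..<lo + ?a + k div 2]"
      using 1 False by (subst balanced_tree.simps) simp
    also have "\<dots> = [lo..<lo + k]"
      using upt_add_eq_append[of lo "lo + ?a" "k div 2"] by simp
    finally show ?thesis .
  qed
qed

lemma max_balanced_balanced_tree: "1 \<le> k \<Longrightarrow> max_balanced (balanced_tree lo k)"
proof (induction lo k rule: balanced_tree.induct)
  case (1 lo k)
  show ?case
  proof (cases "k \<le> 1")
    case True
    then show ?thesis by (simp add: balanced_tree.simps)
  next
    case False
    have "kappa (balanced_tree lo' m) = m" if "1 \<le> m" for lo' m
      using that by (simp add: kappa_def leaves_balanced_tree)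
    moreover have "1 \<le> k div 2" "k div 2 \<le> k - k div 2" "k - k div 2 - k div 2 \<le> 1"
      using False by auto
    ultimately show ?thesis
      using 1 False by (subst balanced_tree.simps) auto
  qed
qed

lemma balanced_phylo_exists:
  assumes "1 \<le> n"
  shows "\<exists>t. is_phylo n t \<and> max_balanced t"
proof
  have "leaves (balanced_tree 1 n) = [1..<Suc n]"
    using leaves_balanced_tree[OF assms, of 1] by simp
  then show "is_phylo n (balanced_tree 1 n) \<and> max_balanced (balanced_tree 1 n)"
    using max_balanced_balanced_tree[OF assms]
    by (simp add: is_phylo_def atLeastLessThanSuc_atLeastAtMost del: upt_Suc)
qed

theorem mainTheorem10:
  fixes n :: nat and T :: btree
  assumes "is_phylo n T"
  shows "(\<forall>T'. is_phylo n T' \<longrightarrow> Phi n T \<le> Phi n T') \<longleftrightarrow> max_balanced T"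
proof -
  have bound: "min_phi n \<le> Phi n t \<and> (Phi n t = min_phi n \<longleftrightarrow> max_balanced t)"
    if "is_phylo n t" for t
    using phi_lower_bound[of t] Phi_eq_phi[OF that] by simp
  obtain B where B: "is_phylo n B" "max_balanced B"
    using balanced_phylo_exists kappa_pos Phi_eq_phi(2)[OF assms] by metis
  show ?thesis
  proof
    assume "\<forall>T'. is_phylo n T' \<longrightarrow> Phi n T \<le> Phi n T'"
    then have "Phi n T \<le> min_phi n" using B bound[OF B(1)] by auto
    then have "Phi n T = min_phi n" using bound[OF assms] by simp
    then show "max_balanced T" using bound[OF assms] by simp
  next
    assume "max_balanced T"
    then show "\<forall>T'. is_phylo n T' \<longrightarrow> Phi n T \<le> Phi n T'"
      using bound[OF assms] bound by auto
  qed
qed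

end
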